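(* Let $n\ge1$, $p\in\mathbb N$ with $p\ge1$, $q\in\mathbb Z$ with $p+q\ge1$, and let $A=\{a_1^{p+q},a_2^{2p+q},\ldots,a_n^{np+q}\}$ (the linear multiset, $k_i=pi+q$). Let $s=\min(m,pn+q)$ and let $\Lambda_m(A)$ be the set of tuples $(\lambda_1,\ldots,\lambda_s)$ of non-negative integers with $\sum_{i=1}^s i\lambda_i=m$ and $\sum_{i=j}^s\lambda_i\le\overline{k_j}$ for $j=1,\ldots,s$. Then $$|C_m(A)|=\sum_{\lambda\in\Lambda_m(A)}\prod_{j=1}^s\binom{\left\lfloor n-\max\!\left(1,\frac{j-q}{p}\right)\right\rfloor+1-\sum_{i=j+1}^s\lambda_i}{\lambda_j}.$$ Moreover, if $m\le n$, then $$|C_m(A)|=\sum_{\substack{\lambda_1+2\lambda_2+\cdots+s\lambda_s=m\\ \lambda_i\in\mathbb Z_{\ge0}}}\prod_{j=1}^s\binom{\left\lfloor n-\max\!\left(1,\frac{j-q}{p}\right)\right\rfloor+1-\sum_{i=j+1}^s\lambda_i}{\lambda_j},$$ the sum running over all non-negative integer solutions.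
   Context: A multiset $A=\{a_1^{k_1},\ldots,a_n^{k_n}\}$ consists of distinct elements $a_1,\ldots,a_n$ with positive integer multiplicities $k_1,\ldots,k_n$. A submultiset of $A$ is a multiset $\{a_1^{r_1},\ldots,a_n^{r_n}\}$ with integers $0\le r_i\le k_i$, of cardinality $r_1+\cdots+r_n$. $C_m(A)$ denotes the set of all submultisets of $A$ of cardinality $m$. For each integer $j\ge1$, $\overline{k_j}=|\{i\in\{1,\ldots,n\}: k_i\ge j\}|$. *)

theory Defs
  imports Complex_Main "HOL-Library.Multiset"
begin

definition gen_mset :: "nat \<Rightarrow> (nat \<Rightarrow> nat) \<Rightarrow> nat multiset" where
  "gen_mset n k = (\<Sum>i\<in>{1..n}. replicate_mset (k i) i)"

definition C :: "nat \<Rightarrow> 'a multiset \<Rightarrow> 'a multiset set" where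
  "C m A = {B. B \<subseteq># A \<and> size B = m}"

text \<open>Linear multiplicities k_i = p i + q (as naturals; positive since p+q \<ge> 1).\<close>
definition lin_k :: "nat \<Rightarrow> int \<Rightarrow> nat \<Rightarrow> nat" where
  "lin_k p q i = nat (int p * int i + q)"

definition linear_mset :: "nat \<Rightarrow> nat \<Rightarrow> int \<Rightarrow> nat multiset" where
  "linear_mset n p q = gen_mset n (lin_k p q)"

definition kbar :: "nat \<Rightarrow> (nat \<Rightarrow> nat) \<Rightarrow> nat \<Rightarrow> nat" where
  "kbar n k j = card {i\<in>{1..n}. k i \<ge> j}"

definition Lambda :: "nat \<Rightarrow> nat \<Rightarrow> nat \<Rightarrow> (nat \<Rightarrow> nat) \<Rightarrow> (nat \<Rightarrow> nat) set" where
  "Lambda s m n k = {l. (\<forall>i. i \<notin> {1..s} \<longrightarrow> l i = 0) \<and> (\<Sum>i=1..s. i * l i) = m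
      \<and> (\<forall>j\<in>{1..s}. (\<Sum>i=j..s. l i) \<le> kbar n k j)}"

definition all_solutions :: "nat \<Rightarrow> nat \<Rightarrow> (nat \<Rightarrow> nat) set" where
  "all_solutions s m = {l. (\<forall>i. i \<notin> {1..s} \<longrightarrow> l i = 0) \<and> (\<Sum>i=1..s. i * l i) = m}"

definition int_choose :: "int \<Rightarrow> nat \<Rightarrow> nat" where
  "int_choose t r = (if t < 0 then 0 else nat t choose r)"

definition lin_term :: "nat \<Rightarrow> nat \<Rightarrow> int \<Rightarrow> nat \<Rightarrow> (nat \<Rightarrow> nat) \<Rightarrow> nat" where
  "lin_term n p q s l = (\<Prod>j=1..s.
     int_choose (\<lfloor>real n - max 1 (real_of_int (int j - q) / real p)\<rfloor> + 1
                   - int (\<Sum>i=j+1..s. l i)) (l j))"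

end

theory Submission
  imports Defs
begin

text \<open>A submultiset of \<open>A\<close> is the same as its multiplicity vector \<open>r\<close>, with \<open>r i \<le> k i\<close>
  and \<open>\<Sum>i. r i = m\<close>. Group these vectors by their level profile \<open>\<lambda>\<^sub>j = #{i. r i = j}\<close>;
  then \<open>\<Sum>j. j \<lambda>\<^sub>j = m\<close>. The vectors with a prescribed profile are counted by filling the
  levels from the top \<open>s\<close> downwards: the \<open>\<lambda>\<^sub>j\<close> positions of level \<open>j\<close> are chosen among the
  \<open>kbar\<^sub>j - \<Sum>\<^sub>i\<^sub>>\<^sub>j \<lambda>\<^sub>i\<close> positions with \<open>k i \<ge> j\<close> not yet used by higher levels. For linear
  multiplicities \<open>kbar\<^sub>j = \<lfloor>n - max 1 ((j - q)/p)\<rfloor> + 1\<close>, and a profile violating the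
  constraints of \<open>\<Lambda>\<^sub>m(A)\<close> has a vanishing binomial factor, so the sum may equally run over
  all solutions of \<open>\<Sum>j. j \<lambda>\<^sub>j = m\<close>, whether or not \<open>m \<le> n\<close>.\<close>

definition bounded_compositions :: "nat set \<Rightarrow> (nat \<Rightarrow> nat) \<Rightarrow> nat \<Rightarrow> (nat \<Rightarrow> nat) set" where
  "bounded_compositions D k m =
     {r. (\<forall>i. i \<notin> D \<longrightarrow> r i = 0) \<and> (\<forall>i\<in>D. r i \<le> k i) \<and> (\<Sum>i\<in>D. r i) = m}"

definition level_funs :: "nat set \<Rightarrow> nat \<Rightarrow> (nat \<Rightarrow> nat) \<Rightarrow> (nat \<Rightarrow> nat) \<Rightarrow> (nat \<Rightarrow> nat) set" where
  "level_funs D s k l =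
     {r. (\<forall>i. i \<notin> D \<longrightarrow> r i = 0) \<and> (\<forall>i\<in>D. r i \<le> k i \<and> r i \<le> s)
         \<and> (\<forall>j\<in>{1..s}. card {i\<in>D. r i = j} = l j)}"

definition level_choose_prod :: "nat set \<Rightarrow> nat \<Rightarrow> (nat \<Rightarrow> nat) \<Rightarrow> (nat \<Rightarrow> nat) \<Rightarrow> nat" where
  "level_choose_prod D s k l =
     (\<Prod>j=1..s. int_choose (int (card {i\<in>D. j \<le> k i}) - int (\<Sum>i=j+1..s. l i)) (l j))"

section \<open>Counting functions with a prescribed level profile\<close>

lemma finite_bounded_support_funs:
  "finite D \<Longrightarrow> finite {r::nat \<Rightarrow> nat. (\<forall>i. i \<notin> D \<longrightarrow> r i = 0) \<and> (\<forall>i\<in>D. r i \<le> b)}"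
  by (rule finite_subset[OF _ finite_set_of_finite_funs[of D "{..b}" 0]]) auto

lemma finite_level_funs: "finite D \<Longrightarrow> finite (level_funs D s k l)"
  by (rule finite_subset[OF _ finite_bounded_support_funs[of D s]]) (auto simp: level_funs_def)

lemma level_set_override_on:
  assumes "S \<subseteq> D" and "r \<in> level_funs (D - S) s k l"
  shows "{i\<in>D. override_on r (\<lambda>_. Suc s) S i = Suc s} = S"
proof -
  have "r i \<le> s" if "i \<in> D - S" for i using assms(2) that by (simp add: level_funs_def)
  then have "override_on r (\<lambda>_. Suc s) S i = Suc s \<longleftrightarrow> i \<in> S" if "i \<in> D" for i
    using that by (cases "i \<in> S") fastforce+
  then show ?thesis using assms(1) by auto
qed

lemma level_funs_Suc:
  "level_funs D (Suc s) k l =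
     (\<Union>S\<in>{S. S \<subseteq> {i\<in>D. Suc s \<le> k i} \<and> card S = l (Suc s)}.
        (\<lambda>r. override_on r (\<lambda>_. Suc s) S) ` level_funs (D - S) s k l)"
  (is "?L = (\<Union>S\<in>?SS. ?g S ` _)")
proof
  show "?L \<subseteq> (\<Union>S\<in>?SS. ?g S ` level_funs (D - S) s k l)"
  proof
    fix r assume r: "r \<in> ?L"
    define S where "S = {i\<in>D. r i = Suc s}"
    define r' where "r' = override_on r (\<lambda>_. 0) S"
    have "S \<in> ?SS" using r by (force simp: S_def level_funs_def)
    moreover have "r' \<in> level_funs (D - S) s k l"
    proof -
      have "{i\<in>D - S. r' i = j} = {i\<in>D. r i = j}" if "j \<in> {1..s}" for j
        using that by (auto simp: r'_def S_def)
      then show ?thesis using r by (auto simp: level_funs_def r'_def S_def override_on_def le_Suc_eq)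
    qed
    moreover have "r = ?g S r'" by (auto simp: override_on_def r'_def S_def)
    ultimately show "r \<in> (\<Union>S\<in>?SS. ?g S ` level_funs (D - S) s k l)" by blast
  qed
next
  show "(\<Union>S\<in>?SS. ?g S ` level_funs (D - S) s k l) \<subseteq> ?L"
  proof (rule UN_least, rule image_subsetI)
    fix S r assume S: "S \<in> ?SS" and r: "r \<in> level_funs (D - S) s k l"
    have "S \<subseteq> D" using S by auto
    have "card {i\<in>D. ?g S r i = j} = l j" if "j \<in> {1..Suc s}" for j
    proof (cases "j = Suc s")
      case True
      then show ?thesis using level_set_override_on[OF \<open>S \<subseteq> D\<close> r] S by simp
    next
      case False
      then have "{i\<in>D. ?g S r i = j} = {i\<in>D - S. r i = j}" by (auto simp: override_on_def)
      then show ?thesis using r False that by (simp add: level_funs_def)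
    qed
    moreover have "\<forall>i\<in>D. ?g S r i \<le> k i \<and> ?g S r i \<le> Suc s"
    proof
      fix i assume "i \<in> D"
      have "r i \<le> k i \<and> r i \<le> s" if "i \<notin> S" using r that \<open>i \<in> D\<close> by (simp add: level_funs_def)
      then show "?g S r i \<le> k i \<and> ?g S r i \<le> Suc s"
        using S \<open>i \<in> D\<close> by (cases "i \<in> S") auto
    qed
    moreover have "\<forall>i. i \<notin> D \<longrightarrow> ?g S r i = 0"
      using r \<open>S \<subseteq> D\<close> by (auto simp: level_funs_def override_on_def)
    ultimately show "?g S r \<in> ?L" by (simp add: level_funs_def)
  qed
qed

lemma level_choose_prod_Suc:
  "level_choose_prod D (Suc s) k l =
     (card {i\<in>D. Suc s \<le> k i} choose l (Suc s)) *
     (\<Prod>j=1..s. int_choose (int (card {i\<in>D. j \<le> k i}) - int (\<Sum>i=j+1..Suc s. l i)) (l j))"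
  unfolding level_choose_prod_def by (subst prod.nat_ivl_Suc') (simp_all add: int_choose_def)

lemma level_choose_prod_remove_top:
  assumes "finite D" and "S \<subseteq> {i\<in>D. Suc s \<le> k i}" and "card S = l (Suc s)"
  shows "level_choose_prod (D - S) s k l =
     (\<Prod>j=1..s. int_choose (int (card {i\<in>D. j \<le> k i}) - int (\<Sum>i=j+1..Suc s. l i)) (l j))"
  unfolding level_choose_prod_def
proof (rule prod.cong[OF refl])
  fix j assume j: "j \<in> {1..s}"
  have sub: "S \<subseteq> {i\<in>D. j \<le> k i}" using assms(2) j by auto
  have "{i\<in>D - S. j \<le> k i} = {i\<in>D. j \<le> k i} - S" by auto
  then have "card {i\<in>D - S. j \<le> k i} = card {i\<in>D. j \<le> k i} - l (Suc s)"
    using sub assms by (simp add: card_Diff_subset finite_subset)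
  moreover have "l (Suc s) \<le> card {i\<in>D. j \<le> k i}"
    using card_mono[OF _ sub] assms by simp
  moreover have "(\<Sum>i=j+1..Suc s. l i) = (\<Sum>i=j+1..s. l i) + l (Suc s)" using j by simp
  ultimately have "int (card {i\<in>D - S. j \<le> k i}) - int (\<Sum>i=j+1..s. l i)
      = int (card {i\<in>D. j \<le> k i}) - int (\<Sum>i=j+1..Suc s. l i)"
    by (simp only: of_nat_diff of_nat_add)
  then show "int_choose (int (card {i\<in>D - S. j \<le> k i}) - int (\<Sum>i=j+1..s. l i)) (l j)
      = int_choose (int (card {i\<in>D. j \<le> k i}) - int (\<Sum>i=j+1..Suc s. l i)) (l j)"
    by (simp only:)
qed

lemma card_level_funs:
  "finite D \<Longrightarrow> card (level_funs D s k l) = level_choose_prod D s k l"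
proof (induction s arbitrary: D)
  case 0
  have "level_funs D 0 k l = {\<lambda>i. 0}" by (auto simp: level_funs_def)
  then show ?case by (simp add: level_choose_prod_def)
next
  case (Suc s)
  define SS where "SS = {S. S \<subseteq> {i\<in>D. Suc s \<le> k i} \<and> card S = l (Suc s)}"
  define g where "g S r = override_on r (\<lambda>_. Suc s) S" for S and r :: "nat \<Rightarrow> nat"
  define Y where "Y = (\<Prod>j=1..s. int_choose (int (card {i\<in>D. j \<le> k i}) - int (\<Sum>i=j+1..Suc s. l i)) (l j))"
  have "finite SS" using Suc.prems by (auto simp: SS_def intro: finite_subset[of _ "Pow D"])
  have card_image_g: "card (g S ` level_funs (D - S) s k l) = Y" if "S \<in> SS" for S
  proof -
    have "inj_on (g S) (level_funs (D - S) s k l)"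
      by (rule inj_onI) (auto simp: level_funs_def g_def override_on_def fun_eq_iff, metis)
    then show ?thesis
      using that Suc by (simp add: card_image level_choose_prod_remove_top SS_def Y_def)
  qed
  have disjoint: "g S1 ` level_funs (D - S1) s k l \<inter> g S2 ` level_funs (D - S2) s k l = {}"
    if "S1 \<in> SS" "S2 \<in> SS" "S1 \<noteq> S2" for S1 S2
    using that level_set_override_on[of S1 D] level_set_override_on[of S2 D]
    by (fastforce simp: SS_def g_def)
  have "card (level_funs D (Suc s) k l) = (\<Sum>S\<in>SS. card (g S ` level_funs (D - S) s k l))"
    unfolding level_funs_Suc SS_def[symmetric] g_def[symmetric]
    using disjoint \<open>finite SS\<close> Suc.prems by (intro card_UN_disjoint) (auto intro: finite_level_funs)
  also have "\<dots> = card SS * Y" using card_image_g by simp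
  also have "card SS = card {i\<in>D. Suc s \<le> k i} choose l (Suc s)"
    unfolding SS_def using Suc.prems by (intro n_subsets) simp
  finally show ?case by (simp add: level_choose_prod_Suc Y_def)
qed

section \<open>Submultisets and their level profiles\<close>

lemma count_gen_mset: "count (gen_mset n k) i = (if i \<in> {1..n} then k i else 0)"
  by (simp add: gen_mset_def count_sum)

lemma card_C_gen_mset_eq_card_compositions:
  "card (C m (gen_mset n k)) = card (bounded_compositions {1..n} k m)"
proof -
  have size_eq: "size B = (\<Sum>i\<in>{1..n}. count B i)" if "set_mset B \<subseteq> {1..n}" for B :: "nat multiset"
    using that unfolding size_multiset_overloaded_eq
    by (intro sum.mono_neutral_left) (auto simp: not_in_iff)
  have "bij_betw count (C m (gen_mset n k)) (bounded_compositions {1..n} k m)"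
  proof (rule bij_betw_imageI)
    show "inj_on count (C m (gen_mset n k))" by (rule inj_onI) (metis multiset_eqI)
    show "count ` C m (gen_mset n k) = bounded_compositions {1..n} k m"
    proof
      show "count ` C m (gen_mset n k) \<subseteq> bounded_compositions {1..n} k m"
      proof (rule image_subsetI)
        fix B assume B: "B \<in> C m (gen_mset n k)"
        then have bound: "count B i \<le> (if i \<in> {1..n} then k i else 0)" for i
          using mset_subset_eq_count[of B "gen_mset n k"] by (simp add: C_def count_gen_mset)
        have le: "\<forall>i\<in>{1..n}. count B i \<le> k i" using bound by (metis (full_types))
        have zero: "\<forall>i. i \<notin> {1..n} \<longrightarrow> count B i = 0" using bound by (metis le_zero_eq)
        then have "set_mset B \<subseteq> {1..n}" by (metis not_in_iff subsetI)
        then show "count B \<in> bounded_compositions {1..n} k m"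
          using le zero size_eq B by (simp add: bounded_compositions_def C_def)
      qed
    next
      show "bounded_compositions {1..n} k m \<subseteq> count ` C m (gen_mset n k)"
      proof
        fix r assume r: "r \<in> bounded_compositions {1..n} k m"
        then have cB: "count (gen_mset n r) = r"
          by (auto simp: fun_eq_iff count_gen_mset bounded_compositions_def)
        have "size (gen_mset n r) = m" using r by (simp add: gen_mset_def bounded_compositions_def)
        then have "gen_mset n r \<in> C m (gen_mset n k)"
          using r cB by (auto simp: C_def subseteq_mset_def count_gen_mset bounded_compositions_def)
        then show "r \<in> count ` C m (gen_mset n k)" using cB by force
      qed
    qed
  qed
  then show ?thesis by (rule bij_betw_same_card)
qed

lemma sum_eq_sum_level_cards:
  assumes "finite D" and "\<forall>i\<in>D. r i \<le> s"
  shows "(\<Sum>i\<in>D. r i) = (\<Sum>j=1..s. j * card {i\<in>D. r i = j})"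
proof -
  have "(\<Sum>j=1..s. j * card {i\<in>D. r i = j}) = (\<Sum>j=1..s. \<Sum>i\<in>D. if r i = j then j else 0)"
    using assms(1) by (simp add: sum.If_cases Int_def mult.commute)
  also have "\<dots> = (\<Sum>i\<in>D. \<Sum>j=1..s. if r i = j then j else 0)" by (rule sum.swap)
  also have "\<dots> = (\<Sum>i\<in>D. r i)" using assms(2) by (intro sum.cong) auto
  finally show ?thesis by simp
qed

lemma finite_all_solutions: "finite (all_solutions s m)"
proof (rule finite_subset[OF _ finite_bounded_support_funs[of "{1..s}" m]])
  have "l i \<le> m" if "l \<in> all_solutions s m" "i \<in> {1..s}" for l i
  proof -
    have "l i \<le> i * l i" using that(2) by simp
    also have "\<dots> \<le> (\<Sum>i=1..s. i * l i)" using that(2) by (intro member_le_sum) auto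
    finally show ?thesis using that(1) by (simp add: all_solutions_def)
  qed
  then show "all_solutions s m \<subseteq> {r. (\<forall>i. i \<notin> {1..s} \<longrightarrow> r i = 0) \<and> (\<forall>i\<in>{1..s}. r i \<le> m)}"
    by (auto simp: all_solutions_def)
qed simp

lemma bounded_compositions_eq_UN_level_funs:
  assumes "finite D" and "\<forall>i\<in>D. min (k i) m \<le> s"
  shows "bounded_compositions D k m = (\<Union>l\<in>all_solutions s m. level_funs D s k l)"
proof
  show "bounded_compositions D k m \<subseteq> (\<Union>l\<in>all_solutions s m. level_funs D s k l)"
  proof
    fix r assume r: "r \<in> bounded_compositions D k m"
    have rs: "\<forall>i\<in>D. r i \<le> s"
    proof
      fix i assume i: "i \<in> D"
      have "r i \<le> (\<Sum>i\<in>D. r i)" using assms(1) i by (intro member_le_sum) auto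
      then show "r i \<le> s" using r i assms(2) by (force simp: bounded_compositions_def)
    qed
    define l where "l j = (if j \<in> {1..s} then card {i\<in>D. r i = j} else 0)" for j
    have "(\<Sum>j=1..s. j * l j) = (\<Sum>j=1..s. j * card {i\<in>D. r i = j})" by (simp add: l_def)
    also have "\<dots> = m"
      using sum_eq_sum_level_cards[OF assms(1) rs] r by (simp add: bounded_compositions_def)
    finally have "l \<in> all_solutions s m" by (auto simp: all_solutions_def l_def)
    moreover have "r \<in> level_funs D s k l"
      using r rs by (auto simp: level_funs_def bounded_compositions_def l_def)
    ultimately show "r \<in> (\<Union>l\<in>all_solutions s m. level_funs D s k l)" by blast
  qed
next
  show "(\<Union>l\<in>all_solutions s m. level_funs D s k l) \<subseteq> bounded_compositions D k m"
  proof (intro UN_least subsetI)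
    fix l r assume l: "l \<in> all_solutions s m" and r: "r \<in> level_funs D s k l"
    then have "(\<Sum>i\<in>D. r i) = (\<Sum>j=1..s. j * l j)"
      using sum_eq_sum_level_cards[OF assms(1), of r s] by (simp add: level_funs_def)
    then show "r \<in> bounded_compositions D k m"
      using l r by (simp add: bounded_compositions_def level_funs_def all_solutions_def)
  qed
qed

theorem card_C_gen_mset:
  assumes "\<forall>i\<in>{1..n}. min (k i) m \<le> s"
  shows "card (C m (gen_mset n k)) = (\<Sum>l\<in>all_solutions s m. level_choose_prod {1..n} s k l)"
proof -
  have disjoint: "level_funs D s k l1 \<inter> level_funs D s k l2 = {}"
    if "l1 \<in> all_solutions s m" "l2 \<in> all_solutions s m" "l1 \<noteq> l2" for D l1 l2
  proof -
    obtain j where j: "l1 j \<noteq> l2 j" using \<open>l1 \<noteq> l2\<close> by (auto simp: fun_eq_iff)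
    then have "j \<in> {1..s}" using that by (auto simp: all_solutions_def)
    then show ?thesis using j by (auto simp: level_funs_def)
  qed
  have "card (C m (gen_mset n k)) = card (\<Union>l\<in>all_solutions s m. level_funs {1..n} s k l)"
    using bounded_compositions_eq_UN_level_funs[of "{1..n}" k m s] assms
    by (simp add: card_C_gen_mset_eq_card_compositions)
  also have "\<dots> = (\<Sum>l\<in>all_solutions s m. card (level_funs {1..n} s k l))"
    using disjoint by (intro card_UN_disjoint finite_all_solutions) (auto intro: finite_level_funs)
  finally show ?thesis by (simp add: card_level_funs)
qed

lemma sum_Lambda_level_choose_prod:
  "(\<Sum>l\<in>Lambda s m n k. level_choose_prod {1..n} s k l)
     = (\<Sum>l\<in>all_solutions s m. level_choose_prod {1..n} s k l)"
proof (rule sum.mono_neutral_left[OF finite_all_solutions])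
  show "Lambda s m n k \<subseteq> all_solutions s m" by (auto simp: Lambda_def all_solutions_def)
  show "\<forall>l\<in>all_solutions s m - Lambda s m n k. level_choose_prod {1..n} s k l = 0"
  proof
    fix l assume "l \<in> all_solutions s m - Lambda s m n k"
    then obtain j where j: "j \<in> {1..s}" and gt: "kbar n k j < (\<Sum>i=j..s. l i)"
      by (auto simp: Lambda_def all_solutions_def not_le)
    have "(\<Sum>i=j..s. l i) = l j + (\<Sum>i=j+1..s. l i)" using j by (simp add: sum.atLeast_Suc_atMost)
    then have "int (kbar n k j) - int (\<Sum>i=j+1..s. l i) < int (l j)" using gt by linarith
    then have "int_choose (int (card {i\<in>{1..n}. j \<le> k i}) - int (\<Sum>i=j+1..s. l i)) (l j) = 0"
      by (auto simp: int_choose_def kbar_def)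
    then show "level_choose_prod {1..n} s k l = 0"
      unfolding level_choose_prod_def using j by (intro prod_zero) auto
  qed
qed

section \<open>Linear multiplicities\<close>

lemma floor_diff_max_one: "\<lfloor>real n - max 1 x\<rfloor> = int n - max 1 \<lceil>x\<rceil>"
proof -
  have "\<lceil>max 1 x\<rceil> = max 1 \<lceil>x\<rceil>"
    by (cases "x \<le> 1") (auto simp: max_def ceiling_le_iff, linarith+)
  moreover have "\<lfloor>real n - y\<rfloor> = int n - \<lceil>y\<rceil>" for y :: real
    using floor_add_int[of "- y" "int n"] by (simp add: floor_minus)
  ultimately show ?thesis by simp
qed

lemma kbar_lin_k:
  assumes "p \<ge> 1" and "1 \<le> j" and "int j \<le> int p * int n + q"
  shows "int (kbar n (lin_k p q) j) = \<lfloor>real n - max 1 (real_of_int (int j - q) / real p)\<rfloor> + 1"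
proof -
  define x where "x = real_of_int (int j - q) / real p"
  have le_iff: "int j \<le> int p * int i + q \<longleftrightarrow> \<lceil>x\<rceil> \<le> int i" for i
  proof -
    have "int j \<le> int p * int i + q \<longleftrightarrow> real_of_int (int j - q) \<le> real_of_int (int p * int i)"
      unfolding of_int_le_iff by linarith
    also have "\<dots> \<longleftrightarrow> \<lceil>x\<rceil> \<le> int i"
      using assms(1) by (simp add: x_def ceiling_le_iff divide_le_eq mult.commute)
    finally show ?thesis .
  qed
  have "j \<le> lin_k p q i \<longleftrightarrow> \<lceil>x\<rceil> \<le> int i" for i
    using assms(2) le_iff[of i] unfolding lin_k_def by linarith
  moreover have "1 \<le> i \<and> \<lceil>x\<rceil> \<le> int i \<longleftrightarrow> nat (max 1 \<lceil>x\<rceil>) \<le> i" for i by linarith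
  ultimately have "{i\<in>{1..n}. j \<le> lin_k p q i} = {nat (max 1 \<lceil>x\<rceil>)..n}" by auto
  moreover have "\<lceil>x\<rceil> \<le> int n" using le_iff[of n] assms(3) by simp
  ultimately have "int (kbar n (lin_k p q) j) = int n + 1 - max 1 \<lceil>x\<rceil>"
    by (simp add: kbar_def)
  then show ?thesis by (simp add: floor_diff_max_one x_def)
qed

lemma level_choose_prod_lin_k:
  assumes "p \<ge> 1" and "int s \<le> int p * int n + q"
  shows "level_choose_prod {1..n} s (lin_k p q) l = lin_term n p q s l"
  unfolding level_choose_prod_def lin_term_def
  using kbar_lin_k[OF assms(1), of _ n q] assms(2)
  by (intro prod.cong) (auto simp: kbar_def)

theorem theorem4p4:
  fixes n p m :: nat and q :: int
  assumes "n \<ge> 1" and "p \<ge> 1" and "int p + q \<ge> 1"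
  defines "s \<equiv> nat (min (int m) (int p * int n + q))"
  shows "card (C m (linear_mset n p q))
           = (\<Sum>l\<in>Lambda s m n (lin_k p q). lin_term n p q s l)
         \<and> (m \<le> n \<longrightarrow> card (C m (linear_mset n p q))
           = (\<Sum>l\<in>all_solutions s m. lin_term n p q s l))"
proof -
  have "int p * 1 \<le> int p * int n" using assms(1) by (intro mult_left_mono) auto
  then have s_le: "int s \<le> int p * int n + q" using assms(3) unfolding s_def by linarith
  have "lin_k p q i \<le> nat (int p * int n + q)" if "i \<in> {1..n}" for i
    using that mult_left_mono[of "int i" "int n" "int p"] by (simp add: lin_k_def)
  then have "\<forall>i\<in>{1..n}. min (lin_k p q i) m \<le> s" unfolding s_def by fastforce
  moreover have "lin_term n p q s = level_choose_prod {1..n} s (lin_k p q)"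
    using level_choose_prod_lin_k[OF assms(2) s_le] by auto
  ultimately show ?thesis
    using card_C_gen_mset sum_Lambda_level_choose_prod by (simp add: linear_mset_def)
qed

end
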